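(* Let $b \geq 2$ be an integer and let $p$ be a prime number such that $p$ divides $b+1$. Then every extra-special $p$-group $G$ of order $p^{2b+1}$ admits a diagonal double Kodaira structure of strong type $(b,\,p)$.
   Context: Notation: for elements $x,y$ of a group, $[x,y]=xyx^{-1}y^{-1}$; $o(x)$ is the order of $x$; $\langle x_1,\dots,x_m\rangle$ is the subgroup generated. Definition (diagonal double Kodaira structure). Let $G$ be a finite group and $b,n\ge 2$ integers. A diagonal double Kodaira structure of type $(b,n)$ on $G$ is a set of $4b+1$ elements $\mathsf{r}_{11},\mathsf{t}_{11},\dots,\mathsf{r}_{1b},\mathsf{t}_{1b},\mathsf{r}_{21},\mathsf{t}_{21},\dots,\mathsf{r}_{2b},\mathsf{t}_{2b},\mathsf{z}$ which generate $G$, with $o(\mathsf{z})=n$, satisfying the following relations for all $j,k\in\{1,\dots,b\}$: (Surface relations) $[\mathsf{r}_{1b}^{-1},\mathsf{t}_{1b}^{-1}]\,\mathsf{t}_{1b}^{-1}\,[\mathsf{r}_{1,b-1}^{-1},\mathsf{t}_{1,b-1}^{-1}]\,\mathsf{t}_{1,b-1}^{-1}\cdots[\mathsf{r}_{11}^{-1},\mathsf{t}_{11}^{-1}]\,\mathsf{t}_{11}^{-1}\,(\mathsf{t}_{11}\mathsf{t}_{12}\cdots\mathsf{t}_{1b})=\mathsf{z}$, $[\mathsf{r}_{21}^{-1},\mathsf{t}_{21}]\,\mathsf{t}_{21}\,[\mathsf{r}_{22}^{-1},\mathsf{t}_{22}]\,\mathsf{t}_{22}\cdots[\mathsf{r}_{2b}^{-1},\mathsf{t}_{2b}]\,\mathsf{t}_{2b}\,(\mathsf{t}_{2b}^{-1}\mathsf{t}_{2,b-1}^{-1}\cdots\mathsf{t}_{21}^{-1})=\mathsf{z}^{-1}$.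 (Action of $\mathsf{r}_{1j}$) $[\mathsf{r}_{1j},\mathsf{r}_{2k}]=1$ if $j<k$; $[\mathsf{r}_{1j},\mathsf{r}_{2j}]=1$; $[\mathsf{r}_{1j},\mathsf{r}_{2k}]=\mathsf{z}^{-1}\mathsf{r}_{2k}\mathsf{r}_{2j}^{-1}\mathsf{z}\mathsf{r}_{2j}\mathsf{r}_{2k}^{-1}$ if $j>k$; $[\mathsf{r}_{1j},\mathsf{t}_{2k}]=1$ if $j<k$; $[\mathsf{r}_{1j},\mathsf{t}_{2j}]=\mathsf{z}^{-1}$; $[\mathsf{r}_{1j},\mathsf{t}_{2k}]=[\mathsf{z}^{-1},\mathsf{t}_{2k}]$ if $j>k$; $[\mathsf{r}_{1j},\mathsf{z}]=[\mathsf{r}_{2j}^{-1},\mathsf{z}]$. (Action of $\mathsf{t}_{1j}$) $[\mathsf{t}_{1j},\mathsf{r}_{2k}]=1$ if $j<k$; $[\mathsf{t}_{1j},\mathsf{r}_{2j}]=\mathsf{t}_{2j}^{-1}\mathsf{z}\mathsf{t}_{2j}$; $[\mathsf{t}_{1j},\mathsf{r}_{2k}]=[\mathsf{t}_{2j}^{-1},\mathsf{z}]$ if $j>k$; $[\mathsf{t}_{1j},\mathsf{t}_{2k}]=1$ if $j<k$; $[\mathsf{t}_{1j},\mathsf{t}_{2j}]=[\mathsf{t}_{2j}^{-1},\mathsf{z}]$; $[\mathsf{t}_{1j},\mathsf{t}_{2k}]=\mathsf{t}_{2j}^{-1}\mathsf{z}\mathsf{t}_{2j}\mathsf{z}^{-1}\mathsf{t}_{2k}\mathsf{z}\mathsf{t}_{2j}^{-1}\mathsf{z}^{-1}\mathsf{t}_{2j}\mathsf{t}_{2k}^{-1}$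 if $j>k$; $[\mathsf{t}_{1j},\mathsf{z}]=[\mathsf{t}_{2j}^{-1},\mathsf{z}]$. Such a structure is of strong type $(b,n)$ if both $K_1:=\langle \mathsf{r}_{11},\mathsf{t}_{11},\dots,\mathsf{r}_{1b},\mathsf{t}_{1b},\mathsf{z}\rangle$ and $K_2:=\langle \mathsf{r}_{21},\mathsf{t}_{21},\dots,\mathsf{r}_{2b},\mathsf{t}_{2b},\mathsf{z}\rangle$ equal $G$, and of non-strong type otherwise. Definition. For a prime $p$, a finite $p$-group $G$ is extra-special if its center $Z(G)$ is cyclic of order $p$ and $G/Z(G)$ is a non-trivial elementary abelian $p$-group. *)

theory Defs
  imports "HOL-Algebra.Algebra"
begin

definition gcomm :: "('a, 'b) monoid_scheme \<Rightarrow> 'a \<Rightarrow> 'a \<Rightarrow> 'a" where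
  "gcomm G x y = x \<otimes>\<^bsub>G\<^esub> y \<otimes>\<^bsub>G\<^esub> inv\<^bsub>G\<^esub> x \<otimes>\<^bsub>G\<^esub> inv\<^bsub>G\<^esub> y"

definition gprod :: "('a, 'b) monoid_scheme \<Rightarrow> 'a list \<Rightarrow> 'a" where
  "gprod G xs = foldr (\<lambda>x y. x \<otimes>\<^bsub>G\<^esub> y) xs \<one>\<^bsub>G\<^esub>"

definition group_center :: "('a, 'b) monoid_scheme \<Rightarrow> 'a set" where
  "group_center G = {z \<in> carrier G. \<forall>x \<in> carrier G. z \<otimes>\<^bsub>G\<^esub> x = x \<otimes>\<^bsub>G\<^esub> z}"

definition extra_special :: "('a, 'b) monoid_scheme \<Rightarrow> nat \<Rightarrow> bool" where
  "extra_special G p \<longleftrightarrow>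
     group G \<and> Factorial_Ring.prime p \<and> finite (carrier G) \<and> (\<exists>k. order G = p ^ k) \<and>
     (\<exists>g \<in> group_center G. generate G {g} = group_center G) \<and>
     card (group_center G) = p \<and>
     (let Q = G Mod group_center G in
     comm_group Q \<and>
     (\<forall>C \<in> carrier Q.
        C [^]\<^bsub>Q\<^esub> p = \<one>\<^bsub>Q\<^esub>) \<and>
     carrier Q \<noteq> {\<one>\<^bsub>Q\<^esub>})"

(* diagonal double Kodaira structure of type (b,n): the elements r_{1j}, t_{1j},
   r_{2j}, t_{2j} are given by functions r1 t1 r2 t2 on indices j in {1..b}. *)
definition ddks :: "('a, 'b) monoid_scheme \<Rightarrow> nat \<Rightarrow> nat \<Rightarrow>
     (nat \<Rightarrow> 'a) \<Rightarrow> (nat \<Rightarrow> 'a) \<Rightarrow> (nat \<Rightarrow> 'a) \<Rightarrow> (nat \<Rightarrow> 'a) \<Rightarrow> 'a \<Rightarrow> bool" where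
  "ddks G b n r1 t1 r2 t2 z \<longleftrightarrow>
     (let m = (\<lambda>x y. x \<otimes>\<^bsub>G\<^esub> y); i = m_inv G; c = gcomm G in
     b \<ge> 2 \<and> n \<ge> 2 \<and>
     (\<forall>j \<in> {1..b}. r1 j \<in> carrier G \<and> t1 j \<in> carrier G \<and> r2 j \<in> carrier G \<and> t2 j \<in> carrier G) \<and>
     z \<in> carrier G \<and>
     generate G (r1 ` {1..b} \<union> t1 ` {1..b} \<union> r2 ` {1..b} \<union> t2 ` {1..b} \<union> {z}) = carrier G \<and>
     group.ord G z = n \<and>
     \<comment> \<open>surface relations\<close>
     m (gprod G (map (\<lambda>j. m (c (i (r1 j)) (i (t1 j))) (i (t1 j))) (rev [1..<b+1])))
       (gprod G (map t1 [1..<b+1])) = z \<and>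
     m (gprod G (map (\<lambda>j. m (c (i (r2 j)) (t2 j)) (t2 j)) [1..<b+1]))
       (gprod G (map (\<lambda>j. i (t2 j)) (rev [1..<b+1]))) = i z \<and>
     (\<forall>j \<in> {1..b}. \<forall>k \<in> {1..b}.
        \<comment> \<open>action of r_{1j}\<close>
        (j < k \<longrightarrow> c (r1 j) (r2 k) = \<one>\<^bsub>G\<^esub>) \<and>
        (j = k \<longrightarrow> c (r1 j) (r2 j) = \<one>\<^bsub>G\<^esub>) \<and>
        (j > k \<longrightarrow> c (r1 j) (r2 k) = m (m (m (m (m (i z) (r2 k)) (i (r2 j))) z) (r2 j)) (i (r2 k))) \<and>
        (j < k \<longrightarrow> c (r1 j) (t2 k) = \<one>\<^bsub>G\<^esub>) \<and>
        (j = k \<longrightarrow> c (r1 j) (t2 j) = i z) \<and>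
        (j > k \<longrightarrow> c (r1 j) (t2 k) = c (i z) (t2 k)) \<and>
        c (r1 j) z = c (i (r2 j)) z \<and>
        \<comment> \<open>action of t_{1j}\<close>
        (j < k \<longrightarrow> c (t1 j) (r2 k) = \<one>\<^bsub>G\<^esub>) \<and>
        (j = k \<longrightarrow> c (t1 j) (r2 j) = m (m (i (t2 j)) z) (t2 j)) \<and>
        (j > k \<longrightarrow> c (t1 j) (r2 k) = c (i (t2 j)) z) \<and>
        (j < k \<longrightarrow> c (t1 j) (t2 k) = \<one>\<^bsub>G\<^esub>) \<and>
        (j = k \<longrightarrow> c (t1 j) (t2 j) = c (i (t2 j)) z) \<and>
        (j > k \<longrightarrow> c (t1 j) (t2 k) =
           gprod G [i (t2 j), z, t2 j, i z, t2 k, z, i (t2 j), i z, t2 j, i (t2 k)]) \<and>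
        c (t1 j) z = c (i (t2 j)) z))"

(* strong type: K1 and K2 both equal G *)
definition ddks_strong :: "('a, 'b) monoid_scheme \<Rightarrow> nat \<Rightarrow> nat \<Rightarrow>
     (nat \<Rightarrow> 'a) \<Rightarrow> (nat \<Rightarrow> 'a) \<Rightarrow> (nat \<Rightarrow> 'a) \<Rightarrow> (nat \<Rightarrow> 'a) \<Rightarrow> 'a \<Rightarrow> bool" where
  "ddks_strong G b n r1 t1 r2 t2 z \<longleftrightarrow>
     ddks G b n r1 t1 r2 t2 z \<and>
     generate G (r1 ` {1..b} \<union> t1 ` {1..b} \<union> {z}) = carrier G \<and>
     generate G (r2 ` {1..b} \<union> t2 ` {1..b} \<union> {z}) = carrier G"

end

theory Submission
  imports Defs
begin

text \<open>
  Let \<open>z\<close> generate the centre \<open>Z(G) \<cong> \<int>/p\<close>. As \<open>G/Z(G)\<close> is abelian, every commutator is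
  central, so \<open>(a, b) \<mapsto> [a, b]\<close> is a bimultiplicative alternating form with values in \<open>\<langle>z\<rangle>\<close>.
  A symplectic Gram--Schmidt process produces \<open>r\<^sub>1, t\<^sub>1, \<dots>, r\<^sub>b, t\<^sub>b\<close> with \<open>[r\<^sub>j, t\<^sub>j] = z\<close>
  and all other pairs commuting: if \<open>C\<close> is the centralizer of the elements chosen so far and
  \<open>x, y \<in> C\<close> satisfy \<open>[x, y] = z\<close>, then \<open>(a, b, c) \<mapsto> c x\<^sup>a y\<^sup>b\<close> is a bijection from
  \<open>[0, p)\<^sup>2 \<times> C'\<close> onto \<open>C\<close>, where \<open>C'\<close> is the centralizer of the chosen elements together
  with \<open>x\<close> and \<open>y\<close>; so each step divides the order of the centralizer by \<open>p\<^sup>2\<close>. After \<open>b\<close>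
  steps the centralizer has order \<open>p\<close>, hence is \<open>Z(G)\<close>, and the family together with \<open>z\<close>
  generates \<open>G\<close>.

  Taking \<open>r\<^sub>1\<^sub>j = r\<^sub>2\<^sub>j = t\<^sub>j\<close> and \<open>t\<^sub>1\<^sub>j = t\<^sub>2\<^sub>j = r\<^sub>j\<close>, so that \<open>[r\<^sub>1\<^sub>j, t\<^sub>1\<^sub>j] = z\<^sup>-\<^sup>1\<close>, all action
  relations become identities between words in which \<open>z\<close> is central, and the two surface
  relations reduce to \<open>z\<^sup>-\<^sup>b = z\<close> and \<open>z\<^sup>b = z\<^sup>-\<^sup>1\<close>, which hold because \<open>p\<close> divides \<open>b + 1\<close>.
\<close>

section \<open>Commutators and centralizers\<close>

lemma (in group) mult_inv_cancel_left [simp]: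
  "x \<in> carrier G \<Longrightarrow> y \<in> carrier G \<Longrightarrow> x \<otimes> (inv x \<otimes> y) = y"
  by (simp add: m_assoc [symmetric])

lemma (in group) inv_mult_cancel_left [simp]:
  "x \<in> carrier G \<Longrightarrow> y \<in> carrier G \<Longrightarrow> inv x \<otimes> (x \<otimes> y) = y"
  by (simp add: m_assoc [symmetric])

lemma (in group) gcomm_closed [intro, simp]:
  "a \<in> carrier G \<Longrightarrow> b \<in> carrier G \<Longrightarrow> gcomm G a b \<in> carrier G"
  by (simp add: gcomm_def)

lemma (in group) gcomm_eq_mult_inv:
  "a \<in> carrier G \<Longrightarrow> b \<in> carrier G \<Longrightarrow> gcomm G a b = (a \<otimes> b) \<otimes> inv (b \<otimes> a)"
  by (simp add: gcomm_def inv_mult_group m_assoc)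

lemma (in group) gcomm_eq_one_iff:
  "a \<in> carrier G \<Longrightarrow> b \<in> carrier G \<Longrightarrow> gcomm G a b = \<one> \<longleftrightarrow> a \<otimes> b = b \<otimes> a"
  by (metis gcomm_eq_mult_inv inv_solve_right' l_one m_closed one_closed)

lemma (in group) gcomm_self [simp]: "a \<in> carrier G \<Longrightarrow> gcomm G a a = \<one>"
  by (simp add: gcomm_eq_one_iff)

lemma (in group) gcomm_one_left [simp]: "b \<in> carrier G \<Longrightarrow> gcomm G \<one> b = \<one>"
  by (simp add: gcomm_eq_one_iff)

lemma (in group) gcomm_one_right [simp]: "a \<in> carrier G \<Longrightarrow> gcomm G a \<one> = \<one>"
  by (simp add: gcomm_eq_one_iff)

lemma (in group) gcomm_swap:
  "a \<in> carrier G \<Longrightarrow> b \<in> carrier G \<Longrightarrow> gcomm G b a = inv (gcomm G a b)"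
  by (simp add: gcomm_def inv_mult_group m_assoc)

lemma (in group) gcomm_mult_left_conj:
  "a \<in> carrier G \<Longrightarrow> b \<in> carrier G \<Longrightarrow> c \<in> carrier G \<Longrightarrow>
   gcomm G (a \<otimes> b) c = a \<otimes> gcomm G b c \<otimes> inv a \<otimes> gcomm G a c"
  by (simp add: gcomm_def inv_mult_group m_assoc)

lemma (in group) gcomm_mult_right_conj:
  "a \<in> carrier G \<Longrightarrow> b \<in> carrier G \<Longrightarrow> c \<in> carrier G \<Longrightarrow>
   gcomm G a (b \<otimes> c) = gcomm G a b \<otimes> (b \<otimes> gcomm G a c \<otimes> inv b)"
  by (simp add: gcomm_def inv_mult_group m_assoc)

lemma (in group) inv_commute:
  assumes "a \<in> carrier G" "s \<in> carrier G" "a \<otimes> s = s \<otimes> a"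
  shows "inv a \<otimes> s = s \<otimes> inv a"
proof -
  have "inv a \<otimes> s = inv a \<otimes> (s \<otimes> a) \<otimes> inv a"
    using assms(1,2) by (simp add: m_assoc)
  also have "\<dots> = inv a \<otimes> (a \<otimes> s) \<otimes> inv a"
    using assms(3) by simp
  also have "\<dots> = s \<otimes> inv a"
    using assms(1,2) by (simp add: m_assoc)
  finally show ?thesis .
qed

definition centralizer :: "('a, 'b) monoid_scheme \<Rightarrow> 'a set \<Rightarrow> 'a set" where
  "centralizer G S = {g \<in> carrier G. \<forall>s\<in>S. g \<otimes>\<^bsub>G\<^esub> s = s \<otimes>\<^bsub>G\<^esub> g}"

lemma group_center_eq_centralizer: "group_center G = centralizer G (carrier G)"
  unfolding group_center_def centralizer_def by auto

lemma centralizer_antimono: "S \<subseteq> T \<Longrightarrow> centralizer G T \<subseteq> centralizer G S"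
  by (auto simp: centralizer_def)

lemma (in group) centralizer_subgroup:
  assumes "S \<subseteq> carrier G"
  shows "subgroup (centralizer G S) G"
proof (rule subgroupI)
  fix a b assume a: "a \<in> centralizer G S" and b: "b \<in> centralizer G S"
  show "inv a \<in> centralizer G S"
    using a assms by (auto simp: centralizer_def inv_commute)
  show "a \<otimes> b \<in> centralizer G S"
    using a b assms by (auto simp: centralizer_def m_assoc [symmetric]) (metis m_assoc subsetD)
qed (use assms in \<open>auto simp: centralizer_def intro!: exI[of _ \<one>]\<close>)

lemma (in group) center_subgroup: "subgroup (group_center G) G"
  unfolding group_center_eq_centralizer by (rule centralizer_subgroup) simp

lemma (in group) center_commute:
  "w \<in> group_center G \<Longrightarrow> g \<in> carrier G \<Longrightarrow> w \<otimes> g = g \<otimes> w"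
  by (simp add: group_center_def)

lemma (in group) center_carrier: "w \<in> group_center G \<Longrightarrow> w \<in> carrier G"
  by (simp add: group_center_def)

lemma (in group) center_conj:
  "w \<in> group_center G \<Longrightarrow> a \<in> carrier G \<Longrightarrow> inv a \<otimes> w \<otimes> a = w"
  by (simp add: center_commute center_carrier m_assoc)

lemma (in group) subgroup_nat_pow_closed:
  "subgroup H G \<Longrightarrow> x \<in> H \<Longrightarrow> x [^] (n::nat) \<in> H"
  by (induction n) (auto simp: subgroup.one_closed subgroup.m_closed)

lemma (in group) gcomm_inv_left:
  assumes "a \<in> carrier G" "b \<in> carrier G" "gcomm G a b \<in> group_center G"
  shows "gcomm G (inv a) b = inv (gcomm G a b)"
proof -
  have "gcomm G (inv a) b = inv a \<otimes> inv (gcomm G a b) \<otimes> a"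
    using assms(1,2) by (simp add: gcomm_def inv_mult_group m_assoc)
  also have "\<dots> = inv (gcomm G a b)"
    using assms center_commute[OF subgroup.m_inv_closed[OF center_subgroup assms(3)], of a]
    by (simp add: m_assoc)
  finally show ?thesis .
qed

lemma (in group) gcomm_inv_right:
  assumes "a \<in> carrier G" "b \<in> carrier G" "gcomm G a b \<in> group_center G"
  shows "gcomm G a (inv b) = inv (gcomm G a b)"
proof -
  have "gcomm G a (inv b) = inv b \<otimes> inv (gcomm G a b) \<otimes> b"
    using assms(1,2) by (simp add: gcomm_def inv_mult_group m_assoc)
  also have "\<dots> = inv (gcomm G a b)"
    using assms center_commute[OF subgroup.m_inv_closed[OF center_subgroup assms(3)], of b]
    by (simp add: m_assoc)
  finally show ?thesis .
qed

lemma (in group) center_normal: "group_center G \<lhd> G"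
proof (rule normalI)
  show "subgroup (group_center G) G"
    by (rule center_subgroup)
  show "\<forall>x\<in>carrier G. group_center G #> x = x <# group_center G"
    unfolding r_coset_def l_coset_def group_center_def by auto
qed

lemma (in group) gcomm_in_center_of_comm_quotient:
  assumes Q: "comm_group (G Mod group_center G)" and a: "a \<in> carrier G" and b: "b \<in> carrier G"
  shows "gcomm G a b \<in> group_center G"
proof -
  let ?Z = "group_center G"
  interpret Z: normal ?Z G
    by (rule center_normal)
  have "?Z #> a \<in> carrier (G Mod ?Z)" "?Z #> b \<in> carrier (G Mod ?Z)"
    using a b unfolding carrier_FactGroup by auto
  then have "(?Z #> a) <#> (?Z #> b) = (?Z #> b) <#> (?Z #> a)"
    using comm_monoid.m_comm[OF comm_group.axioms(1)[OF Q]] by simp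
  then have "?Z #> (a \<otimes> b) = ?Z #> (b \<otimes> a)"
    using a b by (simp add: Z.rcos_sum)
  moreover have "a \<otimes> b \<in> ?Z #> (a \<otimes> b)"
    using a b by (intro rcos_self Z.subgroup_axioms) auto
  ultimately have "(a \<otimes> b) \<otimes> inv (b \<otimes> a) \<in> ?Z"
    using a b by (intro Z.rcos_module_imp is_group) auto
  then show ?thesis
    using a b by (simp add: gcomm_eq_mult_inv)
qed

lemma (in group) gprod_closed [intro]: "set xs \<subseteq> carrier G \<Longrightarrow> gprod G xs \<in> carrier G"
  by (induction xs) (auto simp: gprod_def)

lemma (in group) gprod_Cons: "gprod G (x # xs) = x \<otimes> gprod G xs"
  by (simp add: gprod_def)

lemma (in group) gprod_append:
  "set xs \<subseteq> carrier G \<Longrightarrow> set ys \<subseteq> carrier G \<Longrightarrow> gprod G (xs @ ys) = gprod G xs \<otimes> gprod G ys"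
  by (induction xs) (auto simp: gprod_def m_assoc gprod_closed [unfolded gprod_def])

lemma (in group) gprod_map_mult_inv_rev:
  "(\<And>j. j \<in> set xs \<Longrightarrow> f j \<in> carrier G) \<Longrightarrow>
   gprod G (map f xs) \<otimes> gprod G (map (\<lambda>j. inv (f j)) (rev xs)) = \<one>"
proof (induction xs)
  case (Cons a xs)
  let ?P = "gprod G (map f xs)" and ?Q = "gprod G (map (\<lambda>j. inv (f j)) (rev xs))"
  have closed: "f a \<in> carrier G" "?P \<in> carrier G" "?Q \<in> carrier G"
    using Cons.prems by (auto intro!: gprod_closed)
  have IH: "?P \<otimes> ?Q = \<one>"
    using Cons by simp
  have "gprod G (map (\<lambda>j. inv (f j)) (rev (a # xs))) = ?Q \<otimes> gprod G [inv (f a)]"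
    using Cons.prems gprod_append[of "map (\<lambda>j. inv (f j)) (rev xs)" "[inv (f a)]"] by auto
  also have "\<dots> = ?Q \<otimes> inv (f a)"
    using closed by (simp add: gprod_def)
  finally have "gprod G (map f (a # xs)) \<otimes> gprod G (map (\<lambda>j. inv (f j)) (rev (a # xs)))
      = f a \<otimes> ?P \<otimes> (?Q \<otimes> inv (f a))"
    by (simp add: gprod_Cons)
  also have "\<dots> = f a \<otimes> (?P \<otimes> ?Q) \<otimes> inv (f a)"
    using closed by (simp add: m_assoc)
  finally show ?case
    using IH closed by simp
qed (simp add: gprod_def)

lemma (in group) gprod_map_central_mult:
  assumes "w \<in> group_center G"
  shows "(\<And>j. j \<in> set xs \<Longrightarrow> f j \<in> carrier G) \<Longrightarrow>
    gprod G (map (\<lambda>j. w \<otimes> f j) xs) = w [^] length xs \<otimes> gprod G (map f xs)"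
proof (induction xs)
  case (Cons a xs)
  have w: "w \<in> carrier G" and fa: "f a \<in> carrier G" and P: "gprod G (map f xs) \<in> carrier G"
    using assms Cons.prems by (auto simp: center_carrier intro!: gprod_closed)
  have comm: "f a \<otimes> w [^] length xs = w [^] length xs \<otimes> f a"
    using center_commute[OF subgroup_nat_pow_closed[OF center_subgroup assms] fa] by simp
  have "w \<otimes> f a \<otimes> (w [^] length xs \<otimes> gprod G (map f xs))
      = w \<otimes> (f a \<otimes> w [^] length xs) \<otimes> gprod G (map f xs)"
    using w fa P by (simp add: m_assoc)
  also have "\<dots> = (w \<otimes> w [^] length xs) \<otimes> (f a \<otimes> gprod G (map f xs))"
    using w fa P by (simp add: comm m_assoc)
  also have "\<dots> = w [^] Suc (length xs) \<otimes> (f a \<otimes> gprod G (map f xs))"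
    by (simp only: nat_pow_Suc2[OF w])
  finally have "w \<otimes> f a \<otimes> (w [^] length xs \<otimes> gprod G (map f xs))
      = w [^] Suc (length xs) \<otimes> (f a \<otimes> gprod G (map f xs))" .
  then show ?case
    using Cons by (simp add: gprod_Cons m_assoc)
qed (simp add: gprod_def)

section \<open>Symplectic families and the Kodaira relations\<close>

definition symplectic_family ::
  "('a, 'b) monoid_scheme \<Rightarrow> 'a \<Rightarrow> (nat \<Rightarrow> 'a) \<Rightarrow> (nat \<Rightarrow> 'a) \<Rightarrow> nat \<Rightarrow> bool" where
  "symplectic_family G z r t m \<longleftrightarrow>
     (\<forall>j\<in>{1..m}. r j \<in> carrier G \<and> t j \<in> carrier G) \<and>
     (\<forall>j\<in>{1..m}. \<forall>k\<in>{1..m}. gcomm G (r j) (r k) = \<one>\<^bsub>G\<^esub> \<and> gcomm G (t j) (t k) = \<one>\<^bsub>G\<^esub> \<and>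
        gcomm G (r j) (t k) = (if j = k then z else \<one>\<^bsub>G\<^esub>))"

lemma (in group) symplectic_family_swap:
  assumes "symplectic_family G z r t m"
  shows "symplectic_family G (inv z) t r m"
proof -
  have "gcomm G (t j) (r k) = (if j = k then inv z else \<one>)" if "j \<in> {1..m}" "k \<in> {1..m}" for j k
    using assms that gcomm_swap[of "r k" "t j"] by (auto simp: symplectic_family_def)
  then show ?thesis
    using assms by (auto simp: symplectic_family_def)
qed

lemma (in group) symplectic_family_extend:
  assumes F: "symplectic_family G z r t m"
    and x: "x \<in> centralizer G (r ` {1..m} \<union> t ` {1..m})"
    and y: "y \<in> centralizer G (r ` {1..m} \<union> t ` {1..m})"
    and xy: "gcomm G x y = z"
  shows "symplectic_family G z (r(Suc m := x)) (t(Suc m := y)) (Suc m)"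
proof -
  have c: "x \<in> carrier G" "y \<in> carrier G"
    using x y by (auto simp: centralizer_def)
  have commute: "gcomm G w s = \<one>" "gcomm G s w = \<one>"
    if "w \<in> {x, y}" "s \<in> r ` {1..m} \<union> t ` {1..m}" for w s
    using that x y F c
    by (auto simp: centralizer_def symplectic_family_def gcomm_eq_one_iff)
  have "{1..Suc m} = insert (Suc m) {1..m}"
    by auto
  then show ?thesis
    using F c xy commute by (auto simp: symplectic_family_def)
qed

(* These two lemmas are stated in the exact form taken by the conjuncts of ddks for
   r\<^sub>1\<^sub>j = r\<^sub>2\<^sub>j = r j and t\<^sub>1\<^sub>j = t\<^sub>2\<^sub>j = t j. *)
lemma (in group) symplectic_family_surface_relations:
  assumes z: "z \<in> group_center G" and zb: "z [^] b = inv z"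
    and F: "symplectic_family G (inv z) r t b"
  shows "gprod G (map (\<lambda>j. gcomm G (inv (r j)) (inv (t j)) \<otimes> inv (t j)) (rev [1..<b+1]))
           \<otimes> gprod G (map t [1..<b+1]) = z"
    and "gprod G (map (\<lambda>j. gcomm G (inv (r j)) (t j) \<otimes> t j) [1..<b+1])
           \<otimes> gprod G (map (\<lambda>j. inv (t j)) (rev [1..<b+1])) = inv z"
proof -
  define xs where "xs = [1..<b+1]"
  have xs: "set xs = {1..b}" "length xs = b"
    by (auto simp: xs_def)
  have zc: "z \<in> carrier G" and izc: "inv z \<in> group_center G"
    using z center_carrier subgroup.m_inv_closed[OF center_subgroup] by auto
  have rc: "r j \<in> carrier G" and tc: "t j \<in> carrier G" and rt: "gcomm G (r j) (t j) = inv z"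
    if "j \<in> set xs" for j
    using F that xs by (auto simp: symplectic_family_def)
  have c1: "gcomm G (inv (r j)) (t j) = z" if "j \<in> set xs" for j
    using gcomm_inv_left[of "r j" "t j"] rc tc rt izc zc that by simp
  have c2: "gcomm G (inv (r j)) (inv (t j)) = inv z" if "j \<in> set xs" for j
    using gcomm_inv_right[of "inv (r j)" "t j"] c1 rc tc z that by simp
  let ?P = "gprod G (map t xs)" and ?Q = "gprod G (map (\<lambda>j. inv (t j)) (rev xs))"
  have PQ: "?P \<otimes> ?Q = \<one>" and PQc: "?P \<in> carrier G" "?Q \<in> carrier G"
    using gprod_map_mult_inv_rev[of xs t] tc by (auto intro!: gprod_closed)
  have "gprod G (map (\<lambda>j. gcomm G (inv (r j)) (inv (t j)) \<otimes> inv (t j)) (rev xs))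
      = gprod G (map (\<lambda>j. inv z \<otimes> inv (t j)) (rev xs))"
    using c2 by (intro arg_cong[where f = "gprod G"] map_cong) simp_all
  also have "\<dots> = inv z [^] b \<otimes> ?Q"
    using gprod_map_central_mult[OF izc, of "rev xs"] tc xs by simp
  finally show "gprod G (map (\<lambda>j. gcomm G (inv (r j)) (inv (t j)) \<otimes> inv (t j)) (rev [1..<b+1]))
      \<otimes> gprod G (map t [1..<b+1]) = z"
    using PQ PQc zc zb inv_comm[OF PQ PQc] by (simp add: xs_def m_assoc nat_pow_inv)
  have "gprod G (map (\<lambda>j. gcomm G (inv (r j)) (t j) \<otimes> t j) xs) = gprod G (map (\<lambda>j. z \<otimes> t j) xs)"
    using c1 by (intro arg_cong[where f = "gprod G"] map_cong) simp_all
  also have "\<dots> = z [^] b \<otimes> ?P"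
    using gprod_map_central_mult[OF z, of xs] tc xs by simp
  finally show "gprod G (map (\<lambda>j. gcomm G (inv (r j)) (t j) \<otimes> t j) [1..<b+1])
      \<otimes> gprod G (map (\<lambda>j. inv (t j)) (rev [1..<b+1])) = inv z"
    using PQ PQc zc zb by (simp add: xs_def m_assoc)
qed

lemma (in group) symplectic_family_action_relations:
  assumes z: "z \<in> group_center G" and F: "symplectic_family G (inv z) r t b"
    and j: "j \<in> {1..b}" and k: "k \<in> {1..b}"
  shows "(j < k \<longrightarrow> gcomm G (r j) (r k) = \<one>) \<and>
    (j = k \<longrightarrow> gcomm G (r j) (r j) = \<one>) \<and>
    (k < j \<longrightarrow> gcomm G (r j) (r k) = inv z \<otimes> r k \<otimes> inv (r j) \<otimes> z \<otimes> r j \<otimes> inv (r k)) \<and>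
    (j < k \<longrightarrow> gcomm G (r j) (t k) = \<one>) \<and>
    (j = k \<longrightarrow> gcomm G (r j) (t j) = inv z) \<and>
    (k < j \<longrightarrow> gcomm G (r j) (t k) = gcomm G (inv z) (t k)) \<and>
    gcomm G (r j) z = gcomm G (inv (r j)) z \<and>
    (j < k \<longrightarrow> gcomm G (t j) (r k) = \<one>) \<and>
    (j = k \<longrightarrow> gcomm G (t j) (r j) = inv (t j) \<otimes> z \<otimes> t j) \<and>
    (k < j \<longrightarrow> gcomm G (t j) (r k) = gcomm G (inv (t j)) z) \<and>
    (j < k \<longrightarrow> gcomm G (t j) (t k) = \<one>) \<and>
    (j = k \<longrightarrow> gcomm G (t j) (t j) = gcomm G (inv (t j)) z) \<and>
    (k < j \<longrightarrow> gcomm G (t j) (t k) =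
       gprod G [inv (t j), z, t j, inv z, t k, z, inv (t j), inv z, t j, inv (t k)]) \<and>
    gcomm G (t j) z = gcomm G (inv (t j)) z"
proof -
  have zc: "z \<in> carrier G" and izc: "inv z \<in> group_center G"
    using z center_carrier subgroup.m_inv_closed[OF center_subgroup] by auto
  have c: "r j \<in> carrier G" "r k \<in> carrier G" "t j \<in> carrier G" "t k \<in> carrier G"
    using F j k by (auto simp: symplectic_family_def)
  have rr: "gcomm G (r j) (r k) = \<one>" and tt: "gcomm G (t j) (t k) = \<one>"
    and rt: "gcomm G (r j) (t k) = (if j = k then inv z else \<one>)"
    and tr: "gcomm G (t j) (r k) = (if j = k then z else \<one>)"
    using F j k symplectic_family_swap[OF F] zc by (auto simp: symplectic_family_def)
  have central: "gcomm G g z = \<one>" "gcomm G (inv z) g = \<one>" if "g \<in> carrier G" for g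
    using that z izc zc by (simp_all add: gcomm_eq_one_iff center_commute)
  have rkj: "r k \<otimes> inv (r j) \<in> carrier G"
    using c by simp
  have "inv z \<otimes> r k \<otimes> inv (r j) \<otimes> z \<otimes> r j \<otimes> inv (r k)
      = inv z \<otimes> ((r k \<otimes> inv (r j)) \<otimes> z) \<otimes> (r j \<otimes> inv (r k))"
    using c zc by (simp add: m_assoc)
  also have "\<dots> = inv z \<otimes> (z \<otimes> (r k \<otimes> inv (r j))) \<otimes> (r j \<otimes> inv (r k))"
    by (simp only: center_commute[OF z rkj])
  finally have word_r: "inv z \<otimes> r k \<otimes> inv (r j) \<otimes> z \<otimes> r j \<otimes> inv (r k) = \<one>"
    using c zc by (simp add: m_assoc)
  have "gprod G [inv (t j), z, t j, inv z, t k, z, inv (t j), inv z, t j, inv (t k)]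
      = (inv (t j) \<otimes> z \<otimes> t j) \<otimes> inv z \<otimes> (t k \<otimes> (z \<otimes> (inv (t j) \<otimes> inv z \<otimes> t j)) \<otimes> inv (t k))"
    using c zc by (simp add: gprod_def m_assoc)
  also have "\<dots> = z \<otimes> inv z \<otimes> (t k \<otimes> (z \<otimes> inv z) \<otimes> inv (t k))"
    by (simp only: center_conj[OF z c(3)] center_conj[OF izc c(3)])
  finally have word_t: "gprod G [inv (t j), z, t j, inv z, t k, z, inv (t j), inv z, t j, inv (t k)] = \<one>"
    using c zc by simp
  show ?thesis
    using c rr tt rt tr central word_r word_t center_conj[OF z c(3)] by auto
qed

lemma (in group) ddks_strong_of_symplectic_family:
  assumes "2 \<le> b" "2 \<le> n"
    and z: "z \<in> group_center G" "ord z = n" "n dvd b + 1"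
    and F: "symplectic_family G (inv z) r t b"
    and gen: "generate G (r ` {1..b} \<union> t ` {1..b} \<union> {z}) = carrier G"
  shows "ddks_strong G b n r t r t z"
proof -
  have zc: "z \<in> carrier G"
    using z center_carrier by auto
  have "z [^] b \<otimes> z = \<one>"
    using z pow_eq_id[OF zc, of "b + 1"] by simp
  then have "z [^] b = inv z"
    using inv_equality zc by auto
  note surface = symplectic_family_surface_relations[OF z(1) this F]
  have gen2: "generate G (r ` {1..b} \<union> t ` {1..b} \<union> r ` {1..b} \<union> t ` {1..b} \<union> {z}) = carrier G"
    using gen by (metis Un_absorb Un_assoc Un_left_commute)
  have closed: "\<forall>j\<in>{1..b}. r j \<in> carrier G \<and> t j \<in> carrier G \<and> r j \<in> carrier G \<and> t j \<in> carrier G"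
    using F by (simp add: symplectic_family_def)
  show ?thesis
    unfolding ddks_strong_def ddks_def Let_def
    by (intro conjI ballI symplectic_family_action_relations[OF z(1) F])
      (simp_all only: assms zc surface gen2 closed)
qed

section \<open>Symplectic bases of extra-special groups\<close>

lemma mod_inverse_exists:
  fixes p k :: nat
  assumes "Factorial_Ring.prime p" "\<not> p dvd k"
  obtains j where "k * j mod p = 1"
proof -
  have k: "k \<noteq> 0"
    using assms(2) by (metis dvd_0_right)
  have "coprime k p"
    using prime_imp_coprime[OF assms] by (simp add: ac_simps)
  then obtain j i where "k * j = p * i + 1"
    using bezout_nat[OF k, of p] by (auto simp: coprime_iff_gcd_eq_1)
  then show ?thesis
    using that prime_gt_1_nat[OF assms(1)] by (metis mod_mult_self3 mod_less mult.commute)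
qed

lemma image_fun_upd_atLeastAtMost_Suc:
  "(f(Suc m := a)) ` {1..Suc m} = insert a (f ` {1..m})"
proof -
  have "{1..Suc m} = insert (Suc m) {1..m}"
    by auto
  then show ?thesis
    by auto
qed

locale extra_special_group = group G for G (structure) +
  fixes p :: nat and z :: 'a
  assumes finite_carrier: "finite (carrier G)"
    and prime_p: "Factorial_Ring.prime p"
    and generate_z: "generate G {z} = group_center G"
    and card_center: "card (group_center G) = p"
    and gcomm_in_center: "a \<in> carrier G \<Longrightarrow> b \<in> carrier G \<Longrightarrow> gcomm G a b \<in> group_center G"
begin

lemma z_center: "z \<in> group_center G"
  using generate.incl[of z "{z}" G] generate_z by simp

lemma z_carrier: "z \<in> carrier G"
  using z_center center_carrier by blast

lemma ord_z: "ord z = p"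
  using generate_pow_card[OF z_carrier] generate_z card_center by simp

lemma p_ge_2: "2 \<le> p"
  using prime_p prime_ge_2_nat by blast

lemma z_pow_mod: "z [^] (n::nat) = z [^] (n mod p)"
proof -
  have "z [^] n = (z [^] p) [^] (n div p) \<otimes> z [^] (n mod p)"
    using z_carrier by (simp add: nat_pow_pow nat_pow_mult)
  then show ?thesis
    using pow_ord_eq_1[OF z_carrier] ord_z z_carrier by simp
qed

lemma z_pow_inj: "a < p \<Longrightarrow> c < p \<Longrightarrow> z [^] (a::nat) = z [^] (c::nat) \<Longrightarrow> a = c"
  using ord_inj[OF z_carrier] ord_z p_ge_2 unfolding inj_on_def by force

lemma gcomm_eq_z_pow:
  assumes "a \<in> carrier G" "b \<in> carrier G"
  obtains k where "k < p" "gcomm G a b = z [^] k"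
proof -
  have "group_center G = {z [^] k | k. k \<in> (UNIV :: nat set)}"
    using generate_pow_nat[OF z_carrier] generate_z ord_z p_ge_2 by simp
  then obtain k :: nat where "gcomm G a b = z [^] k"
    using gcomm_in_center[OF assms] by blast
  then show ?thesis
    using that[of "k mod p"] z_pow_mod p_ge_2 by simp
qed

lemma gcomm_mult_left:
  assumes "a \<in> carrier G" "b \<in> carrier G" "c \<in> carrier G"
  shows "gcomm G (a \<otimes> b) c = gcomm G b c \<otimes> gcomm G a c"
  using gcomm_mult_left_conj[OF assms] center_conj[OF gcomm_in_center, of b c "inv a"] assms
  by (simp add: m_assoc [symmetric])

lemma gcomm_mult_right:
  assumes "a \<in> carrier G" "b \<in> carrier G" "c \<in> carrier G"
  shows "gcomm G a (b \<otimes> c) = gcomm G a b \<otimes> gcomm G a c"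
  using gcomm_mult_right_conj[OF assms] center_conj[OF gcomm_in_center, of a c "inv b"] assms
  by simp

lemma gcomm_pow_left: "a \<in> carrier G \<Longrightarrow> b \<in> carrier G \<Longrightarrow> gcomm G (a [^] (n::nat)) b = gcomm G a b [^] n"
  by (induction n) (simp_all add: gcomm_mult_left nat_pow_Suc2 [symmetric])

lemma gcomm_pow_right: "a \<in> carrier G \<Longrightarrow> b \<in> carrier G \<Longrightarrow> gcomm G a (b [^] (n::nat)) = gcomm G a b [^] n"
  by (induction n) (simp_all add: gcomm_mult_right)

lemma gcomm_coordinates:
  assumes x: "x \<in> carrier G" and y: "y \<in> carrier G" and xy: "gcomm G x y = z"
    and c: "c \<in> carrier G" "c \<otimes> x = x \<otimes> c" "c \<otimes> y = y \<otimes> c"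
  shows "gcomm G (c \<otimes> (x [^] (a::nat) \<otimes> y [^] (b::nat))) y = z [^] a"
    and "gcomm G x (c \<otimes> (x [^] a \<otimes> y [^] b)) = z [^] b"
proof -
  have "gcomm G c y = \<one>" "gcomm G x c = \<one>"
    using c x y by (simp_all add: gcomm_eq_one_iff)
  then show "gcomm G (c \<otimes> (x [^] a \<otimes> y [^] b)) y = z [^] a"
    and "gcomm G x (c \<otimes> (x [^] a \<otimes> y [^] b)) = z [^] b"
    using x y c xy z_carrier
    by (simp_all add: gcomm_mult_left gcomm_mult_right gcomm_pow_left gcomm_pow_right)
qed

context
  fixes S x y
  assumes S: "S \<subseteq> carrier G"
    and x: "x \<in> centralizer G S" and y: "y \<in> centralizer G S"
    and xy: "gcomm G x y = z"
begin

lemma centralizer_element_decompose: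
  assumes g: "g \<in> centralizer G S"
  obtains a b c where "a < p" "b < p" "c \<in> centralizer G (insert x (insert y S))"
    "g = c \<otimes> (x [^] a \<otimes> y [^] b)"
proof -
  have subC: "subgroup (centralizer G S) G"
    using centralizer_subgroup[OF S] .
  have xc: "x \<in> carrier G" and yc: "y \<in> carrier G" and gc: "g \<in> carrier G"
    using x y g by (auto simp: centralizer_def)
  obtain a where a: "a < p" and ga: "gcomm G g y = z [^] a"
    using gcomm_eq_z_pow[OF gc yc] by blast
  obtain b where b: "b < p" and gb: "gcomm G x g = z [^] b"
    using gcomm_eq_z_pow[OF xc gc] by blast
  define w where "w = x [^] a \<otimes> y [^] b"
  have wc: "w \<in> carrier G" and wC: "w \<in> centralizer G S"
    using subgroup_nat_pow_closed[OF subC] x y subgroup.m_closed[OF subC] xc yc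
    unfolding w_def by auto
  have w1: "gcomm G w y = z [^] a" and w2: "gcomm G x w = z [^] b"
    using gcomm_coordinates[OF xc yc xy one_closed, of a b] xc yc unfolding w_def by simp_all
  define c where "c = g \<otimes> inv w"
  have cc: "c \<in> carrier G" and cC: "c \<in> centralizer G S"
    using gc wc g wC subgroup.m_closed[OF subC] subgroup.m_inv_closed[OF subC]
    unfolding c_def by auto
  have "gcomm G c y = gcomm G (inv w) y \<otimes> gcomm G g y"
    unfolding c_def using gc wc yc by (simp add: gcomm_mult_left)
  also have "\<dots> = \<one>"
    using ga w1 wc yc z_carrier gcomm_inv_left[OF wc yc gcomm_in_center[OF wc yc]] by simp
  finally have cy: "c \<otimes> y = y \<otimes> c"
    using cc yc by (simp add: gcomm_eq_one_iff)
  have "gcomm G x c = gcomm G x g \<otimes> gcomm G x (inv w)"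
    unfolding c_def using gc wc xc by (simp add: gcomm_mult_right)
  also have "\<dots> = \<one>"
    using gb w2 wc xc z_carrier gcomm_inv_right[OF xc wc gcomm_in_center[OF xc wc]] by simp
  finally have cx: "c \<otimes> x = x \<otimes> c"
    using cc xc by (simp add: gcomm_eq_one_iff)
  have "c \<in> centralizer G (insert x (insert y S))"
    using cC cx cy by (auto simp: centralizer_def)
  moreover have "g = c \<otimes> w"
    unfolding c_def using gc wc by (simp add: m_assoc)
  ultimately show ?thesis
    using that a b unfolding w_def by blast
qed

lemma centralizer_decomposition:
  "bij_betw (\<lambda>(a, b, c). c \<otimes> (x [^] a \<otimes> y [^] b))
     ({..<p} \<times> {..<p} \<times> centralizer G (insert x (insert y S))) (centralizer G S)"
proof (rule bij_betw_imageI)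
  let ?C' = "centralizer G (insert x (insert y S))"
  have subC: "subgroup (centralizer G S) G"
    using centralizer_subgroup[OF S] .
  have xc: "x \<in> carrier G" and yc: "y \<in> carrier G"
    using x y by (auto simp: centralizer_def)
  have C': "c \<in> carrier G \<and> c \<otimes> x = x \<otimes> c \<and> c \<otimes> y = y \<otimes> c" if "c \<in> ?C'" for c
    using that by (auto simp: centralizer_def)
  show "inj_on (\<lambda>(a, b, c). c \<otimes> (x [^] a \<otimes> y [^] b)) ({..<p} \<times> {..<p} \<times> ?C')"
  proof (rule inj_onI, clarsimp)
    fix a b c a' b' c'
    assume a: "a < p" "a' < p" and b: "b < p" "b' < p" and c: "c \<in> ?C'" "c' \<in> ?C'"
      and eq: "c \<otimes> (x [^] a \<otimes> y [^] b) = c' \<otimes> (x [^] a' \<otimes> y [^] b')"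
    have "z [^] a = z [^] a'" and "z [^] b = z [^] b'"
      using gcomm_coordinates[OF xc yc xy, of c a b] gcomm_coordinates[OF xc yc xy, of c' a' b']
        C'[OF c(1)] C'[OF c(2)] eq by auto
    then have "a = a'" "b = b'"
      using z_pow_inj a b by blast+
    then show "a = a' \<and> b = b' \<and> c = c'"
      using eq C'[OF c(1)] C'[OF c(2)] xc yc by simp
  qed
  have "c \<otimes> (x [^] a \<otimes> y [^] b) \<in> centralizer G S" if "c \<in> ?C'" for a b :: nat and c
  proof -
    have "c \<in> centralizer G S"
      using that centralizer_antimono[of S "insert x (insert y S)" G] by blast
    then show ?thesis
      by (intro subgroup.m_closed[OF subC] subgroup_nat_pow_closed[OF subC] x y)
  qed
  moreover have "g \<in> (\<lambda>(a, b, c). c \<otimes> (x [^] a \<otimes> y [^] b)) ` ({..<p} \<times> {..<p} \<times> ?C')"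
    if g: "g \<in> centralizer G S" for g
  proof -
    obtain a b c where "a < p" "b < p" "c \<in> ?C'" "g = c \<otimes> (x [^] a \<otimes> y [^] b)"
      using centralizer_element_decompose[OF g] .
    then show ?thesis
      by (intro image_eqI[of _ _ "(a, b, c)"]) auto
  qed
  ultimately show "(\<lambda>(a, b, c). c \<otimes> (x [^] a \<otimes> y [^] b)) ` ({..<p} \<times> {..<p} \<times> ?C') = centralizer G S"
    by auto
qed

lemma card_centralizer_insert_pair:
  "card (centralizer G S) = p * p * card (centralizer G (insert x (insert y S)))"
  using bij_betw_same_card[OF centralizer_decomposition] by (simp add: card_cartesian_product)

lemma centralizer_subset_generate_insert_pair:
  "centralizer G S \<subseteq> generate G (centralizer G (insert x (insert y S)) \<union> {x, y})"
proof
  fix g assume "g \<in> centralizer G S"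
  then obtain a b c where "a < p" "b < p" and c: "c \<in> centralizer G (insert x (insert y S))"
    and g: "g = c \<otimes> (x [^] a \<otimes> y [^] b)"
    by (rule centralizer_element_decompose)
  let ?H = "generate G (centralizer G (insert x (insert y S)) \<union> {x, y})"
  have H: "subgroup ?H G"
    using x y by (intro generate_is_subgroup) (auto simp: centralizer_def)
  have "c \<in> ?H" "x \<in> ?H" "y \<in> ?H"
    using c by (auto intro: generate.incl)
  then show "g \<in> ?H"
    unfolding g by (intro subgroup.m_closed[OF H] subgroup_nat_pow_closed[OF H])
qed

lemma carrier_subset_generate_insert_pair:
  assumes "carrier G \<subseteq> generate G (centralizer G S \<union> S)"
  shows "carrier G \<subseteq> generate G (centralizer G (insert x (insert y S)) \<union> insert x (insert y S))"
proof -
  let ?H = "generate G (centralizer G (insert x (insert y S)) \<union> insert x (insert y S))"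
  have H: "subgroup ?H G"
    using S x y by (intro generate_is_subgroup) (auto simp: centralizer_def)
  have "centralizer G S \<subseteq> generate G (centralizer G (insert x (insert y S)) \<union> {x, y})"
    by (rule centralizer_subset_generate_insert_pair)
  also have "\<dots> \<subseteq> ?H"
    by (rule mono_generate) auto
  finally have "centralizer G S \<union> S \<subseteq> ?H"
    by (auto intro: generate.incl)
  then have "generate G (centralizer G S \<union> S) \<subseteq> ?H"
    by (rule generate_subgroup_incl[OF _ H])
  with assms show ?thesis
    by (rule order.trans)
qed

end

lemma exists_symplectic_pair:
  assumes S: "S \<subseteq> carrier G" and big: "p < card (centralizer G S)"
    and gen: "carrier G \<subseteq> generate G (centralizer G S \<union> S)"
  obtains x y where "x \<in> centralizer G S" "y \<in> centralizer G S" "gcomm G x y = z"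
proof -
  let ?C = "centralizer G S"
  have "\<not> ?C \<subseteq> group_center G"
  proof
    assume "?C \<subseteq> group_center G"
    then have "card ?C \<le> p"
      using card_mono[OF finite_subset[OF _ finite_carrier]] card_center
      by (metis center_carrier subsetI)
    with big show False
      by simp
  qed
  then obtain x where xC: "x \<in> ?C" and x_noncentral: "x \<notin> group_center G"
    by blast
  have xc: "x \<in> carrier G"
    using xC by (simp add: centralizer_def)
  have "\<not> ?C \<subseteq> centralizer G {x}"
  proof
    assume "?C \<subseteq> centralizer G {x}"
    moreover have "S \<subseteq> centralizer G {x}"
      using xC S by (auto simp: centralizer_def)
    ultimately have "generate G (?C \<union> S) \<subseteq> centralizer G {x}"
      using xc by (intro generate_subgroup_incl centralizer_subgroup) auto
    then have "x \<in> group_center G"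
      using gen xc by (auto simp: centralizer_def group_center_def)
    with x_noncentral show False ..
  qed
  then obtain y0 where y0C: "y0 \<in> ?C" and "\<not> y0 \<otimes> x = x \<otimes> y0"
    by (auto simp: centralizer_def)
  then have y0c: "y0 \<in> carrier G" and xy0: "gcomm G x y0 \<noteq> \<one>"
    using xc by (auto simp: centralizer_def gcomm_eq_one_iff)
  obtain k where "k < p" and k: "gcomm G x y0 = z [^] k"
    using gcomm_eq_z_pow[OF xc y0c] by blast
  with xy0 have "\<not> p dvd k"
    by (auto dest: dvd_imp_le)
  then obtain j where kj: "k * j mod p = 1"
    using mod_inverse_exists prime_p by blast
  have "gcomm G x (y0 [^] j) = z [^] (k * j)"
    using k xc y0c z_carrier by (simp add: gcomm_pow_right nat_pow_pow)
  also have "\<dots> = z"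
    using z_pow_mod[of "k * j"] kj z_carrier by simp
  finally show ?thesis
    using that xC subgroup_nat_pow_closed[OF centralizer_subgroup[OF S] y0C] by blast
qed

lemma card_centralizer_gt:
  assumes order: "order G = p ^ (2 * b + 1)" and "m < b"
    and card: "card (centralizer G S) * p ^ (2 * m) = order G"
  shows "p < card (centralizer G S)"
proof (rule ccontr)
  assume "\<not> ?thesis"
  then have "order G \<le> p ^ Suc (2 * m)"
    using card mult_le_mono1[of "card (centralizer G S)" p "p ^ (2 * m)"] by simp
  moreover have "p ^ Suc (2 * m) < p ^ (2 * b + 1)"
    using \<open>m < b\<close> p_ge_2 by (intro power_strict_increasing) auto
  ultimately show False
    using order by simp
qed

lemma symplectic_family_upto:
  assumes order: "order G = p ^ (2 * b + 1)"
  shows "m \<le> b \<Longrightarrow> \<exists>r t. symplectic_family G z r t m \<and>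
     card (centralizer G (r ` {1..m} \<union> t ` {1..m})) * p ^ (2 * m) = order G \<and>
     carrier G \<subseteq> generate G (centralizer G (r ` {1..m} \<union> t ` {1..m}) \<union> (r ` {1..m} \<union> t ` {1..m}))"
proof (induction m)
  case 0
  have "centralizer G {} = carrier G"
    by (simp add: centralizer_def)
  then show ?case
    by (auto simp: symplectic_family_def order_def intro: generate.incl)
next
  case (Suc m)
  then obtain r t where F: "symplectic_family G z r t m"
    and card: "card (centralizer G (r ` {1..m} \<union> t ` {1..m})) * p ^ (2 * m) = order G"
    and gen: "carrier G \<subseteq> generate G (centralizer G (r ` {1..m} \<union> t ` {1..m}) \<union> (r ` {1..m} \<union> t ` {1..m}))"
    by auto
  define P where "P = r ` {1..m} \<union> t ` {1..m}"
  have P: "P \<subseteq> carrier G"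
    using F by (auto simp: P_def symplectic_family_def)
  have "p < card (centralizer G P)"
    using card_centralizer_gt[OF order _ card[folded P_def]] Suc.prems by simp
  then obtain x y where x: "x \<in> centralizer G P" and y: "y \<in> centralizer G P" and xy: "gcomm G x y = z"
    using exists_symplectic_pair[OF P _ gen[folded P_def]] by blast
  have P': "(r(Suc m := x)) ` {1..Suc m} \<union> (t(Suc m := y)) ` {1..Suc m} = insert x (insert y P)"
    unfolding P_def image_fun_upd_atLeastAtMost_Suc by auto
  have F': "symplectic_family G z (r(Suc m := x)) (t(Suc m := y)) (Suc m)"
    using symplectic_family_extend[OF F _ _ xy] x y unfolding P_def by blast
  have "card (centralizer G (insert x (insert y P))) * p ^ (2 * Suc m) = order G"
    using card card_centralizer_insert_pair[OF P x y xy] unfolding P_def by (simp add: ac_simps)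
  moreover have "carrier G \<subseteq> generate G (centralizer G (insert x (insert y P)) \<union> insert x (insert y P))"
    using carrier_subset_generate_insert_pair[OF P x y xy] gen unfolding P_def by blast
  ultimately show ?case
    by (intro exI[of _ "r(Suc m := x)"] exI[of _ "t(Suc m := y)"] conjI) (simp_all only: P' F')
qed

lemma symplectic_basis_exists:
  assumes order: "order G = p ^ (2 * b + 1)"
  obtains r t where "symplectic_family G z r t b"
    "generate G (r ` {1..b} \<union> t ` {1..b} \<union> {z}) = carrier G"
proof -
  obtain r t where F: "symplectic_family G z r t b"
    and card: "card (centralizer G (r ` {1..b} \<union> t ` {1..b})) * p ^ (2 * b) = order G"
    and gen: "carrier G \<subseteq> generate G (centralizer G (r ` {1..b} \<union> t ` {1..b}) \<union> (r ` {1..b} \<union> t ` {1..b}))"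
    using symplectic_family_upto[OF order] by blast
  define P where "P = r ` {1..b} \<union> t ` {1..b}"
  have P: "P \<subseteq> carrier G"
    using F by (auto simp: P_def symplectic_family_def)
  have "card (centralizer G P) = card (group_center G)"
    using card order p_ge_2 card_center unfolding P_def by simp
  moreover have "group_center G \<subseteq> centralizer G P"
    using P by (auto simp: group_center_def centralizer_def)
  moreover have "finite (centralizer G P)"
    using finite_carrier by (rule finite_subset[rotated]) (auto simp: centralizer_def)
  ultimately have "centralizer G P = generate G {z}"
    using generate_z by (metis card_subset_eq)
  also have "\<dots> \<subseteq> generate G (P \<union> {z})"
    by (rule mono_generate) auto
  finally have "generate G (centralizer G P \<union> P) \<subseteq> generate G (P \<union> {z})"
    using P z_carrier by (intro generate_subgroup_incl generate_is_subgroup) (auto intro: generate.incl)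
  then have "generate G (P \<union> {z}) = carrier G"
    using gen generate_incl[of "P \<union> {z}"] P z_carrier unfolding P_def by blast
  then show ?thesis
    using that F unfolding P_def by blast
qed

end

lemma extra_special_imp_extra_special_group:
  assumes "extra_special G p"
  obtains z where "extra_special_group G p z"
proof -
  interpret group G
    using assms by (simp add: extra_special_def)
  obtain z where "generate G {z} = group_center G"
    using assms by (auto simp: extra_special_def)
  moreover have "gcomm G a b \<in> group_center G" if "a \<in> carrier G" "b \<in> carrier G" for a b
    using gcomm_in_center_of_comm_quotient that assms by (simp add: extra_special_def Let_def)
  ultimately have "extra_special_group G p z"
    using assms by unfold_locales (auto simp: extra_special_def)
  then show ?thesis ..
qed

theorem theorem2p7:
  fixes G :: "('a, 'c) monoid_scheme" and b p :: nat
  assumes "b \<ge> 2" and "Factorial_Ring.prime p" and "p dvd b + 1"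
    and "extra_special G p" and "order G = p ^ (2 * b + 1)"
  shows "\<exists>r1 t1 r2 t2 z. ddks_strong G b p r1 t1 r2 t2 z"
proof -
  obtain z where "extra_special_group G p z"
    using extra_special_imp_extra_special_group[OF assms(4)] .
  then interpret extra_special_group G p z .
  obtain r t where F: "symplectic_family G z r t b"
    and gen: "generate G (r ` {1..b} \<union> t ` {1..b} \<union> {z}) = carrier G"
    using symplectic_basis_exists[OF assms(5)] .
  have "generate G (t ` {1..b} \<union> r ` {1..b} \<union> {z}) = carrier G"
    using gen by (simp add: Un_commute)
  then have "ddks_strong G b p t r t r z"
    using ddks_strong_of_symplectic_family[OF assms(1) p_ge_2 z_center ord_z assms(3)]
      symplectic_family_swap[OF F] by blast
  then show ?thesis
    by blast
qed

end
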